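(* Assume $V=L$. Let $\zeta\in\Xi$, $X\in\mathrm{IPS}_\zeta$, and let $A\subseteq X$ be a set which has the Baire property relative to $X$ and is not meager relative to $X$. Then there is $Y\in\mathrm{IPS}_\zeta$ with $Y\subseteq A$.
   Context: $T$ is the set of all nonempty finite sequences of countable ordinals, ordered by strict extension $\subset$. $\Xi$ is the set of all at most countable $\xi\subseteq T$ closed downward under $\subset$. $D=2^\omega$; $D^\xi$ is the product of $\xi$ copies of $D$ with the product topology; for $\eta\subseteq\xi$ and $x\in D^\xi$, $x\restriction\eta$ is the restriction. For $\zeta\in\Xi$, $\mathrm{IPS}_\zeta$ is the set of all $X\subseteq D^\zeta$ for which there is a homeomorphism $H$ of $D^\zeta$ onto $X$ such that for all $x_0,x_1\in D^\zeta$ and all $\xi\in\Xi$, $\xi\subseteq\zeta$: $x_0\restriction\xi=x_1\restriction\xi\iff H(x_0)\restriction\xi=H(x_1)\restriction\xi$. *)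

theory Defs
  imports "HOL-Analysis.Analysis"
begin

text \<open>Nodes of the tree T: nonempty finite sequences (lists) with entries of type 'a
  (in the paper: countable ordinals). Strict extension: t is a proper initial segment of s.\<close>
definition strict_ext :: "'a list \<Rightarrow> 'a list \<Rightarrow> bool" where
  "strict_ext t s \<longleftrightarrow> (\<exists>u. u \<noteq> [] \<and> s = t @ u)"

definition Xi_set :: "'a list set \<Rightarrow> bool" where
  "Xi_set \<xi> \<longleftrightarrow> countable \<xi> \<and> (\<forall>s\<in>\<xi>. s \<noteq> []) \<and>
     (\<forall>s\<in>\<xi>. \<forall>t. t \<noteq> [] \<and> strict_ext t s \<longrightarrow> t \<in> \<xi>)"

definition Dtop :: "(nat \<Rightarrow> bool) topology" where
  "Dtop = product_topology (\<lambda>_. discrete_topology (UNIV :: bool set)) (UNIV :: nat set)"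

definition Dpow :: "'a list set \<Rightarrow> ('a list \<Rightarrow> (nat \<Rightarrow> bool)) topology" where
  "Dpow \<xi> = product_topology (\<lambda>_. Dtop) \<xi>"

definition IPS :: "'a list set \<Rightarrow> ('a list \<Rightarrow> (nat \<Rightarrow> bool)) set set" where
  "IPS \<zeta> = {X. X \<subseteq> topspace (Dpow \<zeta>) \<and>
     (\<exists>H. homeomorphic_map (Dpow \<zeta>) (subtopology (Dpow \<zeta>) X) H \<and>
       (\<forall>x0\<in>topspace (Dpow \<zeta>). \<forall>x1\<in>topspace (Dpow \<zeta>). \<forall>\<xi>. Xi_set \<xi> \<and> \<xi> \<subseteq> \<zeta> \<longrightarrow>
          (restrict x0 \<xi> = restrict x1 \<xi> \<longleftrightarrow> restrict (H x0) \<xi> = restrict (H x1) \<xi>)))}"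

definition nowhere_dense_in :: "'b topology \<Rightarrow> 'b set \<Rightarrow> bool" where
  "nowhere_dense_in T S \<longleftrightarrow> S \<subseteq> topspace T \<and> T interior_of (T closure_of S) = {}"

definition meager_in :: "'b topology \<Rightarrow> 'b set \<Rightarrow> bool" where
  "meager_in T S \<longleftrightarrow> S \<subseteq> topspace T \<and>
     (\<exists>F. countable F \<and> (\<forall>N\<in>F. nowhere_dense_in T N) \<and> S \<subseteq> \<Union>F)"

definition baire_property_in :: "'b topology \<Rightarrow> 'b set \<Rightarrow> bool" where
  "baire_property_in T S \<longleftrightarrow> S \<subseteq> topspace T \<and>
     (\<exists>U. openin T U \<and> meager_in T ((S - U) \<union> (U - S)))"

end

theory Submission
  imports Defs
begin

text \<open>
  Since A has the Baire property and is not meager, some nonempty open U \<subseteq> X satisfies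
  U - A \<subseteq> \<Union>F for a countable family F of nowhere dense sets. Pulling everything back along a
  parametrization H of X, it suffices to find a continuous self-map K of D^\<zeta> whose image lies
  in the preimage of U and misses the preimage of each N \<in> F, and such that coordinate s of K x
  depends only on, and determines, coordinate s of x: then H \<circ> K parametrizes a set in IPS \<zeta>
  contained in A. K is built by a fusion argument over finite conditions, as in Cohen forcing:
  enumerate the countably many pairs (s, k) and, at stage n, first extend the current condition
  so that its cylinder misses the n-th nowhere dense set however the finitely many reserved bit
  positions are filled, then reserve a fresh position in coordinate s to carry bit k of the
  input.
\<close>

lemma product_topology_neighbourhood:
  assumes "openin (product_topology T I) U" and "x \<in> U"
  obtains J W where "finite J" "J \<subseteq> I" "\<And>i. i \<in> J \<Longrightarrow> openin (T i) (W i) \<and> x i \<in> W i"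
    "{y \<in> topspace (product_topology T I). \<forall>i\<in>J. y i \<in> W i} \<subseteq> U"
proof -
  obtain V where fin: "finite {i \<in> I. V i \<noteq> topspace (T i)}" and V: "\<forall>i\<in>I. openin (T i) (V i)"
    and xV: "x \<in> Pi\<^sub>E I V" and VU: "Pi\<^sub>E I V \<subseteq> U"
    using assms unfolding openin_product_topology_alt by blast
  let ?J = "{i \<in> I. V i \<noteq> topspace (T i)}"
  show thesis
  proof
    show "finite ?J" "?J \<subseteq> I" using fin by auto
    show "openin (T i) (V i) \<and> x i \<in> V i" if "i \<in> ?J" for i
      using that V xV by (auto simp: PiE_iff)
    have "{y \<in> topspace (product_topology T I). \<forall>i\<in>?J. y i \<in> V i} \<subseteq> Pi\<^sub>E I V"
      by (force simp: PiE_iff)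
    then show "{y \<in> topspace (product_topology T I). \<forall>i\<in>?J. y i \<in> V i} \<subseteq> U"
      using VU by blast
  qed
qed

lemma baire_property_not_meager_imp_comeager_open:
  assumes "baire_property_in T A" and "\<not> meager_in T A"
  obtains U F where "openin T U" "U \<noteq> {}" "countable F" "\<And>N. N \<in> F \<Longrightarrow> nowhere_dense_in T N"
    "U - A \<subseteq> \<Union>F"
proof -
  obtain U F where U: "openin T U" and F: "countable F" "\<forall>N\<in>F. nowhere_dense_in T N"
    and AUF: "(A - U) \<union> (U - A) \<subseteq> \<Union>F" and A: "A \<subseteq> topspace T"
    using assms(1) unfolding baire_property_in_def meager_in_def by blast
  have "U \<noteq> {}"
  proof
    assume "U = {}"
    then have "meager_in T A"
      using A F AUF unfolding meager_in_def by blast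
    with assms(2) show False ..
  qed
  then show thesis
    using that U F AUF by blast
qed

lemma nowhere_dense_in_homeomorphic_preimage:
  assumes f: "homeomorphic_map S T f" and N: "nowhere_dense_in T N"
  shows "nowhere_dense_in S {x \<in> topspace S. f x \<in> N}"
proof -
  let ?P = "{x \<in> topspace S. f x \<in> N}"
  have "f ` ?P = N"
    using N homeomorphic_imp_surjective_map[OF f] by (auto simp: nowhere_dense_in_def)
  then have "T closure_of N = f ` (S closure_of ?P)"
    using homeomorphic_map_closure_of[OF f, of ?P] by auto
  then have "T interior_of (T closure_of N) = f ` (S interior_of (S closure_of ?P))"
    using homeomorphic_map_interior_of[OF f closure_of_subset_topspace] by simp
  then show ?thesis
    using N by (auto simp: nowhere_dense_in_def)
qed

lemma restrict_eq_restrict_iff: "restrict f A = restrict g A \<longleftrightarrow> (\<forall>a\<in>A. f a = g a)"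
  by (metis restrict_apply' restrict_ext)

section \<open>Cylinders in D^\<zeta>\<close>

lemma topspace_Dpow: "topspace (Dpow \<zeta>) = (\<Pi>\<^sub>E s\<in>\<zeta>. UNIV)"
  by (simp add: Dpow_def Dtop_def)

lemma compact_space_Dpow: "compact_space (Dpow \<zeta>)"
  by (simp add: Dpow_def Dtop_def compact_space_product_topology compact_space_discrete_topology)

lemma Hausdorff_space_Dpow: "Hausdorff_space (Dpow \<zeta>)"
  by (simp add: Dpow_def Dtop_def Hausdorff_space_product_topology)

lemma continuous_map_into_Dpow:
  "continuous_map T (Dpow \<zeta>) f \<longleftrightarrow> f ` topspace T \<subseteq> extensional \<zeta> \<and>
     (\<forall>s\<in>\<zeta>. \<forall>k. continuous_map T (discrete_topology UNIV) (\<lambda>x. f x s k))"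
  by (simp add: Dpow_def Dtop_def continuous_map_componentwise)

lemma continuous_map_Dpow_bit:
  assumes "s \<in> \<zeta>"
  shows "continuous_map (Dpow \<zeta>) (discrete_topology UNIV) (\<lambda>x. x s k)"
  using continuous_map_into_Dpow[of "Dpow \<zeta>" \<zeta> id] assms by auto

definition condition :: "'a list set \<Rightarrow> ('a list \<times> nat \<rightharpoonup> bool) \<Rightarrow> bool" where
  "condition \<zeta> p \<longleftrightarrow> finite (dom p) \<and> dom p \<subseteq> \<zeta> \<times> UNIV"

lemma dom_Some_comp [simp]: "dom (Some \<circ> f) = UNIV"
  by auto

definition cylinder :: "'a list set \<Rightarrow> ('a list \<times> nat \<rightharpoonup> bool) \<Rightarrow> ('a list \<Rightarrow> nat \<Rightarrow> bool) set" where
  "cylinder \<zeta> p = {x \<in> topspace (Dpow \<zeta>). p \<subseteq>\<^sub>m Some \<circ> case_prod x}"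

lemma cylinder_antimono: "p \<subseteq>\<^sub>m q \<Longrightarrow> cylinder \<zeta> q \<subseteq> cylinder \<zeta> p"
  unfolding cylinder_def using map_le_trans by blast

lemma cylinder_empty [simp]: "cylinder \<zeta> Map.empty = topspace (Dpow \<zeta>)"
  by (simp add: cylinder_def)

lemma mem_cylinder_iff:
  "x \<in> cylinder \<zeta> p \<longleftrightarrow> x \<in> topspace (Dpow \<zeta>) \<and> (\<forall>i\<in>dom p. p i = Some (x (fst i) (snd i)))"
  by (simp add: cylinder_def map_le_def case_prod_beta)

lemma mem_cylinder_restrict_iff:
  "y \<in> cylinder \<zeta> ((Some \<circ> case_prod x) |` D) \<longleftrightarrow> y \<in> topspace (Dpow \<zeta>) \<and> (\<forall>(s, k)\<in>D. y s k = x s k)"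
  by (auto simp: cylinder_def map_le_def dom_def restrict_map_def)

lemma openin_cylinder:
  assumes "condition \<zeta> p"
  shows "openin (Dpow \<zeta>) (cylinder \<zeta> p)"
proof -
  have eq: "cylinder \<zeta> p =
      (\<Inter>i\<in>dom p. {x \<in> topspace (Dpow \<zeta>). x (fst i) (snd i) \<in> {b. p i = Some b}}) \<inter> topspace (Dpow \<zeta>)"
    by (simp add: set_eq_iff mem_cylinder_iff) blast
  have "openin (Dpow \<zeta>) {x \<in> topspace (Dpow \<zeta>). x (fst i) (snd i) \<in> {b. p i = Some b}}"
    if "i \<in> dom p" for i
    using that assms
    by (intro openin_continuous_map_preimage[OF continuous_map_Dpow_bit]) (auto simp: condition_def)
  then show ?thesis
    unfolding eq using assms by (intro openin_INT) (auto simp: condition_def)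
qed

lemma cylinder_nonempty:
  assumes "condition \<zeta> p"
  shows "cylinder \<zeta> p \<noteq> {}"
proof -
  define x where "x = (\<lambda>s\<in>\<zeta>. \<lambda>k. case p (s, k) of Some b \<Rightarrow> b | None \<Rightarrow> False)"
  have "x \<in> cylinder \<zeta> p"
    unfolding mem_cylinder_iff
  proof
    show "x \<in> topspace (Dpow \<zeta>)" by (simp add: x_def topspace_Dpow)
    show "\<forall>i\<in>dom p. p i = Some (x (fst i) (snd i))"
      using assms by (auto simp: x_def condition_def)
  qed
  then show ?thesis by blast
qed

lemma cylinder_basis:
  assumes "openin (Dpow \<zeta>) U" and "x \<in> U"
  obtains D where "finite D" "D \<subseteq> \<zeta> \<times> UNIV" "cylinder \<zeta> ((Some \<circ> case_prod x) |` D) \<subseteq> U"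
proof -
  obtain J W where J: "finite J" "J \<subseteq> \<zeta>" and xW: "\<And>s. s \<in> J \<Longrightarrow> openin Dtop (W s) \<and> x s \<in> W s"
    and JWU: "{y \<in> topspace (product_topology (\<lambda>_. Dtop) \<zeta>). \<forall>s\<in>J. y s \<in> W s} \<subseteq> U"
    using product_topology_neighbourhood[OF assms[unfolded Dpow_def]] by blast
  have "\<forall>s\<in>J. \<exists>L. finite L \<and> {z. \<forall>k\<in>L. z k = x s k} \<subseteq> W s"
  proof
    fix s assume "s \<in> J"
    with xW have "openin (product_topology (\<lambda>_. discrete_topology UNIV) UNIV) (W s)" "x s \<in> W s"
      by (auto simp: Dtop_def)
    then show "\<exists>L. finite L \<and> {z. \<forall>k\<in>L. z k = x s k} \<subseteq> W s"
    proof (rule product_topology_neighbourhood)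
      fix L V
      assume "finite L" and "\<And>k. k \<in> L \<Longrightarrow> openin (discrete_topology UNIV) (V k) \<and> x s k \<in> V k"
        and "{z \<in> topspace (product_topology (\<lambda>_. discrete_topology UNIV) UNIV). \<forall>k\<in>L. z k \<in> V k}
          \<subseteq> W s"
      then show ?thesis by (intro exI[of _ L]) auto
    qed
  qed
  from bchoice[OF this] obtain L where L: "\<forall>s\<in>J. finite (L s) \<and> {z. \<forall>k\<in>L s. z k = x s k} \<subseteq> W s"
    by blast
  show thesis
  proof
    show "finite (Sigma J L)" "Sigma J L \<subseteq> \<zeta> \<times> UNIV" using J L by auto
    show "cylinder \<zeta> ((Some \<circ> case_prod x) |` Sigma J L) \<subseteq> U"
    proof
      fix y assume y: "y \<in> cylinder \<zeta> ((Some \<circ> case_prod x) |` Sigma J L)"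
      have "y s \<in> W s" if "s \<in> J" for s
      proof -
        have "y s k = x s k" if "k \<in> L s" for k
          using y \<open>s \<in> J\<close> that by (auto simp: mem_cylinder_restrict_iff)
        then show ?thesis using L \<open>s \<in> J\<close> by blast
      qed
      moreover have "y \<in> topspace (product_topology (\<lambda>_. Dtop) \<zeta>)"
        using y by (simp add: mem_cylinder_restrict_iff Dpow_def)
      ultimately show "y \<in> U" using JWU by blast
    qed
  qed
qed

lemma nowhere_dense_in_Dpow_avoid:
  assumes N: "nowhere_dense_in (Dpow \<zeta>) N" and p: "condition \<zeta> p"
  obtains r where "condition \<zeta> r" "p \<subseteq>\<^sub>m r" "cylinder \<zeta> r \<inter> N = {}"
proof -
  let ?T = "Dpow \<zeta>"
  have "\<not> cylinder \<zeta> p \<subseteq> ?T closure_of N"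
  proof
    assume "cylinder \<zeta> p \<subseteq> ?T closure_of N"
    then have "cylinder \<zeta> p \<subseteq> ?T interior_of (?T closure_of N)"
      using openin_cylinder[OF p] by (rule interior_of_maximal)
    then show False
      using N cylinder_nonempty[OF p] by (auto simp: nowhere_dense_in_def)
  qed
  then obtain x where x: "x \<in> cylinder \<zeta> p" "x \<notin> ?T closure_of N"
    by blast
  have "openin ?T (cylinder \<zeta> p - ?T closure_of N)"
    using openin_cylinder[OF p] by (rule openin_diff) simp
  then obtain D where D: "finite D" "D \<subseteq> \<zeta> \<times> UNIV"
    and DN: "cylinder \<zeta> ((Some \<circ> case_prod x) |` D) \<subseteq> cylinder \<zeta> p - ?T closure_of N"
    using x by (elim cylinder_basis) auto
  let ?r = "(Some \<circ> case_prod x) |` (D \<union> dom p)"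
  show thesis
  proof
    show "condition \<zeta> ?r"
      using D p by (auto simp: condition_def)
    show "p \<subseteq>\<^sub>m ?r"
      using x(1) by (auto simp: cylinder_def map_le_def)
    have "cylinder \<zeta> ?r \<subseteq> cylinder \<zeta> ((Some \<circ> case_prod x) |` D)"
      by (rule cylinder_antimono) (auto simp: map_le_def)
    moreover have "N \<subseteq> ?T closure_of N"
      using N by (simp add: closure_of_subset nowhere_dense_in_def)
    ultimately show "cylinder \<zeta> ?r \<inter> N = {}"
      using DN by blast
  qed
qed

lemma nowhere_dense_in_Dpow_avoid_finitely_many_fillings:
  assumes N: "nowhere_dense_in (Dpow \<zeta>) N" and q: "condition \<zeta> q"
    and E: "finite E" "E \<subseteq> \<zeta> \<times> UNIV" "dom q \<inter> E = {}"
    and M: "finite M" "\<And>m. m \<in> M \<Longrightarrow> dom m = E"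
  shows "\<exists>q'. condition \<zeta> q' \<and> q \<subseteq>\<^sub>m q' \<and> dom q' \<inter> E = {} \<and> (\<forall>m\<in>M. cylinder \<zeta> (q' ++ m) \<inter> N = {})"
  using M
proof (induction M rule: finite_induct)
  case empty
  then show ?case using q E(3) map_le_refl by blast
next
  case (insert m M)
  then obtain q1 where q1: "condition \<zeta> q1" "q \<subseteq>\<^sub>m q1" "dom q1 \<inter> E = {}"
    and q1M: "\<forall>m'\<in>M. cylinder \<zeta> (q1 ++ m') \<inter> N = {}"
    by auto
  have dm: "dom m = E" using insert.prems by simp
  have "condition \<zeta> (q1 ++ m)"
    using q1(1) dm E by (auto simp: condition_def)
  then obtain r where r: "condition \<zeta> r" "q1 ++ m \<subseteq>\<^sub>m r" "cylinder \<zeta> r \<inter> N = {}"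
    using N nowhere_dense_in_Dpow_avoid by blast
  define q2 where "q2 = r |` (- E)"
  have dq2: "dom q2 \<inter> E = {}" unfolding q2_def by auto
  have "q1 \<subseteq>\<^sub>m q1 ++ m"
    using q1(3) dm by (simp add: map_le_iff_map_add_commute map_add_comm)
  then have "q1 \<subseteq>\<^sub>m q2"
    using r(2) q1(3) by (auto simp: q2_def map_le_def restrict_map_def)
  moreover have "q2 ++ m = r"
  proof
    have "m \<subseteq>\<^sub>m r" using r(2) map_le_map_add map_le_trans by blast
    fix i show "(q2 ++ m) i = r i"
    proof (cases "i \<in> E")
      case True
      then show ?thesis using \<open>m \<subseteq>\<^sub>m r\<close> dm by (metis map_add_dom_app_simps(1) map_le_def)
    next
      case False
      then show ?thesis using dm by (auto simp: q2_def map_add_def dom_def split: option.split)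
    qed
  qed
  moreover have "q1 ++ m' \<subseteq>\<^sub>m q2 ++ m'" if "m' \<in> M" for m'
    using \<open>q1 \<subseteq>\<^sub>m q2\<close> by (auto simp: map_le_def map_add_def split: option.split)
  ultimately have "\<forall>m'\<in>insert m M. cylinder \<zeta> (q2 ++ m') \<inter> N = {}"
    using q1M r(3) cylinder_antimono by blast
  moreover have "condition \<zeta> q2"
    using r(1) by (auto simp: condition_def q2_def intro: finite_subset)
  ultimately show ?case
    using q1(2) \<open>q1 \<subseteq>\<^sub>m q2\<close> dq2 map_le_trans by blast
qed

lemma nowhere_dense_in_Dpow_avoid_all_fillings:
  assumes N: "nowhere_dense_in (Dpow \<zeta>) N" and q: "condition \<zeta> q"
    and E: "finite E" "E \<subseteq> \<zeta> \<times> UNIV" "dom q \<inter> E = {}"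
  obtains q' where "condition \<zeta> q'" "q \<subseteq>\<^sub>m q'" "dom q' \<inter> E = {}"
    "\<And>m. dom m = E \<Longrightarrow> cylinder \<zeta> (q' ++ m) \<inter> N = {}"
proof -
  have "finite {m :: 'a list \<times> nat \<rightharpoonup> bool. dom m = E \<and> ran m \<subseteq> UNIV}"
    using E(1) by (intro finite_set_of_finite_maps) simp_all
  from nowhere_dense_in_Dpow_avoid_finitely_many_fillings[OF N q E this]
  show thesis
    using that by auto
qed

section \<open>The fusion construction\<close>

locale fusion_sequence =
  fixes \<zeta> :: "'a list set"
    and N :: "nat \<Rightarrow> ('a list \<Rightarrow> nat \<Rightarrow> bool) set"
    and g :: "nat \<Rightarrow> 'a list \<times> nat"
    and q0 :: "'a list \<times> nat \<rightharpoonup> bool"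
  assumes nowhere_dense_N: "nowhere_dense_in (Dpow \<zeta>) (N n)"
    and range_g: "range g = \<zeta> \<times> UNIV"
    and condition_q0: "condition \<zeta> q0"
begin

definition extend :: "nat \<Rightarrow> ('a list \<times> nat \<rightharpoonup> bool) \<Rightarrow> ('a list \<times> nat) set \<Rightarrow> ('a list \<times> nat \<rightharpoonup> bool)" where
  "extend n q E = (SOME q'. condition \<zeta> q' \<and> q \<subseteq>\<^sub>m q' \<and> dom q' \<inter> E = {} \<and>
     (\<forall>m. dom m = E \<longrightarrow> cylinder \<zeta> (q' ++ m) \<inter> N n = {}))"

definition fresh :: "'a list \<Rightarrow> ('a list \<times> nat \<rightharpoonup> bool) \<Rightarrow> ('a list \<times> nat) set \<Rightarrow> nat" where
  "fresh s q E = (LEAST k. (s, k) \<notin> dom q \<union> E)"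

primrec stage :: "nat \<Rightarrow> ('a list \<times> nat \<rightharpoonup> bool) \<times> ('a list \<times> nat) set" where
  "stage 0 = (q0, {})"
| "stage (Suc n) =
     (let (q, R) = stage n; q' = extend n q R in (q', insert (fst (g n), fresh (fst (g n)) q' R) R))"

definition Q :: "nat \<Rightarrow> 'a list \<times> nat \<rightharpoonup> bool" where
  "Q n = fst (stage n)"

definition E :: "nat \<Rightarrow> ('a list \<times> nat) set" where
  "E n = snd (stage n)"

definition pos :: "nat \<Rightarrow> 'a list \<times> nat" where
  "pos n = (fst (g n), fresh (fst (g n)) (Q (Suc n)) (E n))"

lemma Q_0: "Q 0 = q0" and E_0: "E 0 = {}"
  by (simp_all add: Q_def E_def)

lemma Q_Suc: "Q (Suc n) = extend n (Q n) (E n)" and E_Suc: "E (Suc n) = insert (pos n) (E n)"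
  by (simp_all add: Q_def E_def pos_def split_def Let_def)

lemma fresh_notin:
  assumes "finite (dom q)" "finite E'"
  shows "(s, fresh s q E') \<notin> dom q \<union> E'"
proof -
  have "finite (snd ` (dom q \<union> E'))" using assms by simp
  then obtain k where "k \<notin> snd ` (dom q \<union> E')"
    using ex_new_if_finite[OF infinite_UNIV_nat] by blast
  then have "(s, k) \<notin> dom q \<union> E'" by force
  then show ?thesis unfolding fresh_def by (rule LeastI)
qed

lemma extend_spec:
  assumes "condition \<zeta> q" "finite E'" "E' \<subseteq> \<zeta> \<times> UNIV" "dom q \<inter> E' = {}"
  shows "condition \<zeta> (extend n q E') \<and> q \<subseteq>\<^sub>m extend n q E' \<and> dom (extend n q E') \<inter> E' = {} \<and>
    (\<forall>m. dom m = E' \<longrightarrow> cylinder \<zeta> (extend n q E' ++ m) \<inter> N n = {})"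
proof -
  have "\<exists>q'. condition \<zeta> q' \<and> q \<subseteq>\<^sub>m q' \<and> dom q' \<inter> E' = {} \<and>
      (\<forall>m. dom m = E' \<longrightarrow> cylinder \<zeta> (q' ++ m) \<inter> N n = {})"
    by (rule nowhere_dense_in_Dpow_avoid_all_fillings[OF nowhere_dense_N[of n] assms]) blast
  then show ?thesis unfolding extend_def by (rule someI_ex)
qed

lemma g_in: "fst (g n) \<in> \<zeta>"
  using range_g by (metis SigmaD1 prod.collapse rangeI)

lemma stage_invariant:
  "condition \<zeta> (Q n) \<and> finite (E n) \<and> E n \<subseteq> \<zeta> \<times> UNIV \<and> dom (Q n) \<inter> E n = {}"
proof (induction n)
  case 0
  then show ?case by (simp add: Q_0 E_0 condition_q0)
next
  case (Suc n)
  then have ext: "condition \<zeta> (Q (Suc n))" "dom (Q (Suc n)) \<inter> E n = {}"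
    using extend_spec[of "Q n" "E n" n] by (simp_all add: Q_Suc)
  moreover have "pos n \<notin> dom (Q (Suc n)) \<union> E n"
    unfolding pos_def using Suc ext by (intro fresh_notin) (auto simp: condition_def)
  ultimately show ?case
    using Suc g_in by (auto simp: E_Suc pos_def)
qed

lemma Q_le_Q_Suc: "Q n \<subseteq>\<^sub>m Q (Suc n)"
  using extend_spec[of "Q n" "E n" n] stage_invariant[of n] by (simp add: Q_Suc)

lemma Q_Suc_avoids: "dom m = E n \<Longrightarrow> cylinder \<zeta> (Q (Suc n) ++ m) \<inter> N n = {}"
  using extend_spec[of "Q n" "E n" n] stage_invariant[of n] by (simp add: Q_Suc)

lemma pos_fresh: "pos n \<notin> dom (Q (Suc n)) \<union> E n"
  unfolding pos_def using stage_invariant by (intro fresh_notin) (auto simp: condition_def)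

lemma Q_mono: "m \<le> n \<Longrightarrow> Q m \<subseteq>\<^sub>m Q n"
  by (induction n rule: dec_induct) (auto intro: map_le_trans Q_le_Q_Suc)

lemma E_eq: "E n = pos ` {..<n}"
  by (induction n) (simp_all add: E_0 E_Suc lessThan_Suc)

lemma inj_pos: "inj pos"
proof (rule linorder_injI)
  fix m n :: nat assume "m < n"
  then have "pos m \<in> E n" by (simp add: E_eq)
  then show "pos m \<noteq> pos n" using pos_fresh[of n] by auto
qed

lemma pos_notin_dom_Q: "pos m \<notin> dom (Q n)"
proof (cases "m < n")
  case True
  then show ?thesis using E_eq[of n] stage_invariant[of n] by auto
next
  case False
  then have "dom (Q n) \<subseteq> dom (Q (Suc m))" by (simp add: Q_mono map_le_implies_dom_le)
  then show ?thesis using pos_fresh[of m] by auto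
qed

text \<open>The union of the chain Q n; if no stage fixes i, the LEAST is junk but Q _ i = None anyway.\<close>

definition Qlim :: "'a list \<times> nat \<rightharpoonup> bool" where
  "Qlim i = Q (LEAST n. i \<in> dom (Q n)) i"

lemma Q_le_Qlim: "Q n \<subseteq>\<^sub>m Qlim"
  unfolding map_le_def
proof
  fix i assume i: "i \<in> dom (Q n)"
  let ?l = "LEAST n. i \<in> dom (Q n)"
  have "i \<in> dom (Q ?l)" "?l \<le> n"
    using LeastI[of "\<lambda>n. i \<in> dom (Q n)" n] Least_le[of "\<lambda>n. i \<in> dom (Q n)" n] i by auto
  then show "Q n i = Qlim i"
    using Q_mono[of ?l n] by (simp add: Qlim_def map_le_def)
qed

text \<open>The reserved position pos n carries bit snd (g n) of coordinate fst (g n) of the input.\<close>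

definition input_bit :: "('a list \<Rightarrow> nat \<Rightarrow> bool) \<Rightarrow> 'a list \<times> nat \<Rightarrow> bool" where
  "input_bit x i = x (fst i) (snd (g (inv pos i)))"

definition embedding :: "('a list \<Rightarrow> nat \<Rightarrow> bool) \<Rightarrow> 'a list \<Rightarrow> nat \<Rightarrow> bool" where
  "embedding x = (\<lambda>s\<in>\<zeta>. \<lambda>k. if (s, k) \<in> range pos then input_bit x (s, k) else Qlim (s, k) = Some True)"

lemma embedding_in_cylinder: "embedding x \<in> cylinder \<zeta> (Q n ++ (Some \<circ> input_bit x) |` E m)"
  unfolding mem_cylinder_iff
proof (intro conjI ballI)
  show "embedding x \<in> topspace (Dpow \<zeta>)"
    by (simp add: embedding_def topspace_Dpow)
  fix i assume "i \<in> dom (Q n ++ (Some \<circ> input_bit x) |` E m)"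
  then consider "i \<in> E m" | "i \<notin> E m" "i \<in> dom (Q n)" by auto
  then show "(Q n ++ (Some \<circ> input_bit x) |` E m) i = Some (embedding x (fst i) (snd i))"
  proof cases
    case 1
    then have "i \<in> range pos" "fst i \<in> \<zeta>" using E_eq stage_invariant[of m] by auto
    then show ?thesis using 1 by (simp add: embedding_def)
  next
    case 2
    then obtain b where b: "Q n i = Some b" by blast
    then have "Qlim i = Some b" using Q_le_Qlim[of n] by (metis domI map_le_def)
    moreover have "i \<notin> range pos" using pos_notin_dom_Q 2 by blast
    moreover have "fst i \<in> \<zeta>" using 2 stage_invariant[of n] by (auto simp: condition_def)
    ultimately show ?thesis using 2 b by (simp add: embedding_def map_add_def)
  qed
qed

lemma embedding_in_cylinder_q0: "embedding x \<in> cylinder \<zeta> q0"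
  using embedding_in_cylinder[of x 0 0] by (simp add: Q_0 E_0)

lemma embedding_notin_N: "embedding x \<notin> N n"
  using embedding_in_cylinder[of x "Suc n" n] Q_Suc_avoids[of "(Some \<circ> input_bit x) |` E n" n] by auto

lemma embedding_coordinate_eq_iff:
  assumes "s \<in> \<zeta>"
  shows "embedding x s = embedding y s \<longleftrightarrow> x s = y s"
proof
  assume eq: "embedding x s = embedding y s"
  show "x s = y s"
  proof
    fix j
    obtain n where n: "g n = (s, j)" using range_g assms by (metis SigmaI UNIV_I rangeE)
    define k where "k = snd (pos n)"
    have pn: "pos n = (s, k)" using n by (simp add: pos_def k_def)
    then have "(s, k) \<in> range pos" "inv pos (s, k) = n"
      using inj_pos by (metis rangeI, metis inv_f_f)
    then have "embedding z s k = z s j" for z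
      using assms n by (simp add: embedding_def input_bit_def)
    from this[of x] this[of y] eq show "x s j = y s j" by simp
  qed
qed (simp add: embedding_def input_bit_def)

lemma continuous_map_embedding: "continuous_map (Dpow \<zeta>) (Dpow \<zeta>) embedding"
  unfolding continuous_map_into_Dpow
proof (intro conjI ballI allI)
  show "embedding ` topspace (Dpow \<zeta>) \<subseteq> extensional \<zeta>"
    by (auto simp: embedding_def)
  fix s k assume "s \<in> \<zeta>"
  then show "continuous_map (Dpow \<zeta>) (discrete_topology UNIV) (\<lambda>x. embedding x s k)"
    by (cases "(s, k) \<in> range pos") (simp_all add: embedding_def input_bit_def continuous_map_Dpow_bit)
qed

end

definition coordinatewise_injective ::
    "'a list set \<Rightarrow> (('a list \<Rightarrow> nat \<Rightarrow> bool) \<Rightarrow> 'a list \<Rightarrow> nat \<Rightarrow> bool) \<Rightarrow> bool" where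
  "coordinatewise_injective \<zeta> K \<longleftrightarrow>
     (\<forall>x\<in>topspace (Dpow \<zeta>). \<forall>y\<in>topspace (Dpow \<zeta>). \<forall>s\<in>\<zeta>. K x s = K y s \<longleftrightarrow> x s = y s)"

lemma nowhere_dense_in_Dpow_empty:
  assumes "nowhere_dense_in (Dpow {}) N"
  shows "N = {}"
proof -
  obtain r where r: "condition {} r" "cylinder {} r \<inter> N = {}"
    using nowhere_dense_in_Dpow_avoid[OF assms, of Map.empty] by (auto simp: condition_def)
  then have "r = Map.empty" by (auto simp: condition_def)
  then show ?thesis
    using r assms by (auto simp: nowhere_dense_in_def)
qed

lemma Dpow_self_map_avoiding_nowhere_dense:
  assumes \<zeta>: "countable \<zeta>" and F: "countable F" "\<And>N. N \<in> F \<Longrightarrow> nowhere_dense_in (Dpow \<zeta>) N"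
    and V: "openin (Dpow \<zeta>) V" "V \<noteq> {}"
  obtains K where "continuous_map (Dpow \<zeta>) (Dpow \<zeta>) K" "K ` topspace (Dpow \<zeta>) \<subseteq> V - \<Union>F"
    "coordinatewise_injective \<zeta> K"
proof (cases "\<zeta> = {}")
  case True
  then have "V = topspace (Dpow \<zeta>)"
    using V openin_subset by (fastforce simp: topspace_Dpow)
  moreover have "\<Union>F = {}"
    using F(2) nowhere_dense_in_Dpow_empty True by blast
  ultimately show thesis
    using True by (intro that[of id]) (auto simp: coordinatewise_injective_def)
next
  case False
  define g where "g = from_nat_into (\<zeta> \<times> (UNIV :: nat set))"
  have range_g: "range g = \<zeta> \<times> UNIV"
    unfolding g_def using False \<zeta> by (intro range_from_nat_into) auto
  define N where "N = from_nat_into (insert {} F)" \<comment> \<open>{} keeps the family nonempty\<close>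
  have range_N: "range N = insert {} F"
    unfolding N_def using F by (intro range_from_nat_into) auto
  have "nowhere_dense_in (Dpow \<zeta>) (N n)" for n
    using F(2) rangeI[of N n] by (auto simp: range_N nowhere_dense_in_def)
  obtain x0 where "x0 \<in> V" using V by blast
  then obtain D where D: "finite D" "D \<subseteq> \<zeta> \<times> UNIV" and DV: "cylinder \<zeta> ((Some \<circ> case_prod x0) |` D) \<subseteq> V"
    using cylinder_basis[OF V(1)] by blast
  let ?q0 = "(Some \<circ> case_prod x0) |` D"
  have "condition \<zeta> ?q0"
    using D by (simp add: condition_def)
  interpret fusion_sequence \<zeta> N g ?q0
    by unfold_locales fact+
  show thesis
  proof
    show "continuous_map (Dpow \<zeta>) (Dpow \<zeta>) embedding" by (fact continuous_map_embedding)
    have "embedding x \<notin> M" if "M \<in> F" for x M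
    proof -
      have "M \<in> range N" using that range_N by blast
      then obtain n where "M = N n" by blast
      then show ?thesis using embedding_notin_N[of x n] by simp
    qed
    moreover have "embedding x \<in> V" for x
      by (rule subsetD[OF DV embedding_in_cylinder_q0])
    ultimately show "embedding ` topspace (Dpow \<zeta>) \<subseteq> V - \<Union>F"
      by (intro image_subsetI DiffI) auto
    show "coordinatewise_injective \<zeta> embedding"
      by (simp add: coordinatewise_injective_def embedding_coordinate_eq_iff)
  qed
qed

section \<open>Parametrizations\<close>

definition IPS_parametrization ::
    "'a list set \<Rightarrow> ('a list \<Rightarrow> nat \<Rightarrow> bool) set \<Rightarrow> (('a list \<Rightarrow> nat \<Rightarrow> bool) \<Rightarrow> 'a list \<Rightarrow> nat \<Rightarrow> bool) \<Rightarrow> bool" where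
  "IPS_parametrization \<zeta> X H \<longleftrightarrow> homeomorphic_map (Dpow \<zeta>) (subtopology (Dpow \<zeta>) X) H \<and>
     (\<forall>x0\<in>topspace (Dpow \<zeta>). \<forall>x1\<in>topspace (Dpow \<zeta>). \<forall>\<xi>. Xi_set \<xi> \<and> \<xi> \<subseteq> \<zeta> \<longrightarrow>
        (restrict x0 \<xi> = restrict x1 \<xi> \<longleftrightarrow> restrict (H x0) \<xi> = restrict (H x1) \<xi>))"

lemma IPS_iff: "X \<in> IPS \<zeta> \<longleftrightarrow> X \<subseteq> topspace (Dpow \<zeta>) \<and> (\<exists>H. IPS_parametrization \<zeta> X H)"
  by (simp add: IPS_def IPS_parametrization_def)

lemma coordinatewise_injective_restrict_eq_iff:
  assumes "coordinatewise_injective \<zeta> K" "x \<in> topspace (Dpow \<zeta>)" "y \<in> topspace (Dpow \<zeta>)" "\<xi> \<subseteq> \<zeta>"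
  shows "restrict (K x) \<xi> = restrict (K y) \<xi> \<longleftrightarrow> restrict x \<xi> = restrict y \<xi>"
  using assms unfolding coordinatewise_injective_def restrict_eq_restrict_iff by blast

lemma coordinatewise_injective_inj_on:
  assumes "coordinatewise_injective \<zeta> K"
  shows "inj_on K (topspace (Dpow \<zeta>))"
proof (rule inj_onI)
  fix x y assume x: "x \<in> topspace (Dpow \<zeta>)" and y: "y \<in> topspace (Dpow \<zeta>)" and "K x = K y"
  then have "restrict x \<zeta> = restrict y \<zeta>"
    using coordinatewise_injective_restrict_eq_iff[OF assms x y] by simp
  moreover have "restrict x \<zeta> = x" "restrict y \<zeta> = y"
    using x y by (simp_all add: topspace_Dpow PiE_def extensional_restrict)
  ultimately show "x = y" by simp
qed

lemma IPS_image_coordinatewise_injective: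
  assumes H: "IPS_parametrization \<zeta> X H"
    and K: "continuous_map (Dpow \<zeta>) (Dpow \<zeta>) K" "coordinatewise_injective \<zeta> K"
  shows "(H \<circ> K) ` topspace (Dpow \<zeta>) \<in> IPS \<zeta>"
proof -
  let ?T = "Dpow \<zeta>" and ?Y = "(H \<circ> K) ` topspace (Dpow \<zeta>)"
  have Hhom: "homeomorphic_map ?T (subtopology ?T X) H"
    using H by (simp add: IPS_parametrization_def)
  have HK: "continuous_map ?T ?T (H \<circ> K)"
    using continuous_map_compose[OF K(1) homeomorphic_imp_continuous_map[OF Hhom]]
    by (simp add: continuous_map_in_subtopology)
  have Ysub: "?Y \<subseteq> topspace ?T"
    using continuous_map_image_subset_topspace[OF HK] .
  have "inj_on (H \<circ> K) (topspace ?T)"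
    using coordinatewise_injective_inj_on[OF K(2)] homeomorphic_imp_injective_map[OF Hhom]
      continuous_map_image_subset_topspace[OF K(1)]
    by (blast intro: comp_inj_on inj_on_subset)
  then have "homeomorphic_map ?T (subtopology ?T ?Y) (H \<circ> K)"
    using HK Ysub compact_space_Dpow Hausdorff_space_subtopology[OF Hausdorff_space_Dpow]
    by (intro continuous_imp_homeomorphic_map) (auto simp: continuous_map_in_subtopology)
  moreover have "restrict x0 \<xi> = restrict x1 \<xi> \<longleftrightarrow> restrict ((H \<circ> K) x0) \<xi> = restrict ((H \<circ> K) x1) \<xi>"
    if x: "x0 \<in> topspace ?T" "x1 \<in> topspace ?T" and \<xi>: "Xi_set \<xi>" "\<xi> \<subseteq> \<zeta>" for x0 x1 \<xi>
  proof -
    have Kx: "K x0 \<in> topspace ?T" "K x1 \<in> topspace ?T"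
      using x continuous_map_image_subset_topspace[OF K(1)] by auto
    have "restrict x0 \<xi> = restrict x1 \<xi> \<longleftrightarrow> restrict (K x0) \<xi> = restrict (K x1) \<xi>"
      using coordinatewise_injective_restrict_eq_iff[OF K(2) x \<xi>(2)] by simp
    also have "\<dots> \<longleftrightarrow> restrict (H (K x0)) \<xi> = restrict (H (K x1)) \<xi>"
      using H Kx \<xi> by (simp add: IPS_parametrization_def)
    finally show ?thesis by simp
  qed
  ultimately show ?thesis
    using Ysub by (auto simp: IPS_iff IPS_parametrization_def)
qed

lemma homeomorphic_image_avoiding_nowhere_dense:
  assumes \<zeta>: "countable \<zeta>" and H: "homeomorphic_map (Dpow \<zeta>) T H"
    and U: "openin T U" "U \<noteq> {}"
    and F: "countable F" "\<And>N. N \<in> F \<Longrightarrow> nowhere_dense_in T N"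
  obtains K where "continuous_map (Dpow \<zeta>) (Dpow \<zeta>) K" "coordinatewise_injective \<zeta> K"
    "(H \<circ> K) ` topspace (Dpow \<zeta>) \<subseteq> U - \<Union>F"
proof -
  let ?pre = "\<lambda>S. {x \<in> topspace (Dpow \<zeta>). H x \<in> S}"
  have open_pre: "openin (Dpow \<zeta>) (?pre U)"
    using openin_continuous_map_preimage[OF homeomorphic_imp_continuous_map[OF H] U(1)] .
  have nonempty_pre: "?pre U \<noteq> {}"
  proof -
    obtain u where "u \<in> U" using U(2) by blast
    moreover have "U \<subseteq> H ` topspace (Dpow \<zeta>)"
      using openin_subset[OF U(1)] homeomorphic_imp_surjective_map[OF H] by simp
    ultimately show ?thesis by blast
  qed
  have nowhere_dense_pre: "nowhere_dense_in (Dpow \<zeta>) N" if "N \<in> ?pre ` F" for N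
    using that F(2) nowhere_dense_in_homeomorphic_preimage[OF H] by auto
  obtain K where K: "continuous_map (Dpow \<zeta>) (Dpow \<zeta>) K" "coordinatewise_injective \<zeta> K"
    and KU: "K ` topspace (Dpow \<zeta>) \<subseteq> ?pre U - \<Union>(?pre ` F)"
    using Dpow_self_map_avoiding_nowhere_dense[OF \<zeta> countable_image[OF F(1)] nowhere_dense_pre
        open_pre nonempty_pre]
    by blast
  have "(H \<circ> K) ` topspace (Dpow \<zeta>) \<subseteq> U - \<Union>F"
  proof
    fix y assume "y \<in> (H \<circ> K) ` topspace (Dpow \<zeta>)"
    then obtain x where "x \<in> topspace (Dpow \<zeta>)" "y = H (K x)" by auto
    with KU have "K x \<in> ?pre U" "\<forall>N\<in>F. K x \<notin> ?pre N" by auto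
    then show "y \<in> U - \<Union>F" using \<open>y = H (K x)\<close> by blast
  qed
  with K show thesis by (rule that)
qed

theorem corollary3p10:
  fixes \<zeta> :: "'a list set" and X A :: "('a list \<Rightarrow> (nat \<Rightarrow> bool)) set"
  assumes "Xi_set \<zeta>"
    and "X \<in> IPS \<zeta>"
    and "A \<subseteq> X"
    and "baire_property_in (subtopology (Dpow \<zeta>) X) A"
    and "\<not> meager_in (subtopology (Dpow \<zeta>) X) A"
  shows "\<exists>Y \<in> IPS \<zeta>. Y \<subseteq> A"
proof -
  obtain H where H: "IPS_parametrization \<zeta> X H"
    using assms(2) by (auto simp: IPS_iff)
  obtain U F where U: "openin (subtopology (Dpow \<zeta>) X) U" "U \<noteq> {}"
    and F: "countable F" "\<And>N. N \<in> F \<Longrightarrow> nowhere_dense_in (subtopology (Dpow \<zeta>) X) N"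
    and UA: "U - A \<subseteq> \<Union>F"
    using baire_property_not_meager_imp_comeager_open[OF assms(4,5)] by blast
  have "countable \<zeta>"
    using assms(1) by (simp add: Xi_set_def)
  moreover have "homeomorphic_map (Dpow \<zeta>) (subtopology (Dpow \<zeta>) X) H"
    using H by (simp add: IPS_parametrization_def)
  ultimately obtain K where K: "continuous_map (Dpow \<zeta>) (Dpow \<zeta>) K" "coordinatewise_injective \<zeta> K"
    and KU: "(H \<circ> K) ` topspace (Dpow \<zeta>) \<subseteq> U - \<Union>F"
    using homeomorphic_image_avoiding_nowhere_dense[OF _ _ U F] by blast
  have "(H \<circ> K) ` topspace (Dpow \<zeta>) \<in> IPS \<zeta>"
    using H K by (rule IPS_image_coordinatewise_injective)
  moreover have "(H \<circ> K) ` topspace (Dpow \<zeta>) \<subseteq> A"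
    using KU UA by blast
  ultimately show ?thesis by blast
qed

end
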